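(* Let $A\in\mathbb{R}^{m\times n}$ be a sub-Gaussian random matrix with variance proxy $\sigma^2>0$. Then for any $\delta\in(0,1)$ and any $\varepsilon\in(0,1)$, $$\mathbb{P}\left(\|A\|\le \sigma\sqrt{\frac{\log\frac{1}{1-\varepsilon^2}}{\varepsilon^4}(m+n)+\frac{2}{\varepsilon^4}\log\frac{1}{\delta}}\right)\ge 1-\delta,$$ where $\|A\|$ denotes the operator norm of $A$ (largest singular value).
   Context: A random matrix $A\in\mathbb{R}^{m\times n}$ is sub-Gaussian with variance proxy $\sigma^2$ if $\mathbb{E}[A]=0$ and $\mathbb{E}\left[e^{\lambda u^\top A v}\right]\le e^{\lambda^2\sigma^2/2}$ for all $\lambda\in\mathbb{R}$, all $u\in\mathcal{S}^{m-1}$ and all $v\in\mathcal{S}^{n-1}$, where $\mathcal{S}^{k-1}=\{x\in\mathbb{R}^k:\|x\|=1\}$ is the Euclidean unit sphere. No independence of the entries of $A$ is assumed. *)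

theory Defs
  imports "HOL-Analysis.Analysis" "HOL-Probability.Probability"
begin

text \<open>No independence of the entries is assumed.\<close>

definition subgaussian_matrix ::
  "'a measure \<Rightarrow> ('a \<Rightarrow> real^'n^'m) \<Rightarrow> real \<Rightarrow> bool" where
  "subgaussian_matrix M A s \<longleftrightarrow>
     A \<in> borel_measurable M \<and>
     (\<forall>i j. integrable M (\<lambda>w. A w $ i $ j) \<and> (\<integral>w. A w $ i $ j \<partial>M) = 0) \<and>
     (\<forall>l::real. \<forall>u::real^'m. \<forall>v::real^'n. norm u = 1 \<longrightarrow> norm v = 1 \<longrightarrow>
        integrable M (\<lambda>w. exp (l * (u \<bullet> (A w *v v)))) \<and>
        (\<integral>w. exp (l * (u \<bullet> (A w *v v))) \<partial>M) \<le> exp (l\<^sup>2 * s\<^sup>2 / 2))"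

end

theory Submission
  imports Defs
begin

(* The operator norm is the supremum of u . (A v) over unit vectors u, v, and all of these are
   controlled at once by a PAC-Bayesian (Donsker-Varadhan) argument on R^m x R^n.  For the prior
   P = N(0, I) and a tilt l, put Z(A) = E_P exp (l x . (A y) - l^2 sigma^2 |x|^2 |y|^2 / 2).
   Sub-Gaussianity and Fubini give E Z(A) <= 1, so by Markov's inequality delta Z(A) < 1 with
   probability at least 1 - delta.  For fixed unit u, v let
   Q = N((eps sqrt m u, eps sqrt n v), (1 - eps^2) I); then E_Q x . (A y) = eps^2 sqrt (m n) u . (A v),
   E_Q |x|^2 |y|^2 = m n and KL(Q || P) = (m + n) / 2 ln (1 / (1 - eps^2)), so
   Z(A) >= exp (E_Q [..] - KL(Q || P)) bounds u . (A v) for all u, v simultaneously.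
   Optimising l gives the stated radius. *)

section \<open>Gaussian densities on the line\<close>

lemma has_bochner_integral_normal_density:
  assumes "0 < t"
  shows "has_bochner_integral lborel (normal_density \<mu> t) 1"
  using normal_moment_even[OF assms, of \<mu> 0] by simp

lemma has_bochner_integral_normal_central_square:
  assumes "0 < t"
  shows "has_bochner_integral lborel (\<lambda>x. normal_density \<mu> t x * (x - \<mu>)\<^sup>2) (t\<^sup>2)"
  using normal_moment_even[OF assms, of \<mu> 1] assms by simp

lemma has_bochner_integral_normal_square:
  assumes "0 < t"
  shows "has_bochner_integral lborel (\<lambda>x. normal_density \<mu> t x * x\<^sup>2) (\<mu>\<^sup>2 + t\<^sup>2)"
proof -
  have "has_bochner_integral lborel
      (\<lambda>x. normal_density \<mu> t x * (x - \<mu>)\<^sup>2 + 2 * \<mu> * (normal_density \<mu> t x * x) - \<mu>\<^sup>2 * normal_density \<mu> t x)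
      (t\<^sup>2 + 2 * \<mu> * \<mu> - \<mu>\<^sup>2 * 1)"
    using assms
    by (intro has_bochner_integral_add has_bochner_integral_diff has_bochner_integral_mult_right
        has_bochner_integral_normal_central_square normal_moment_nz_1 has_bochner_integral_normal_density)
  then show ?thesis
    by (rule has_bochner_integral_cong[THEN iffD1, rotated 3]) (simp_all add: power2_eq_square algebra_simps)
qed

definition normal_log_ratio :: "real \<Rightarrow> real \<Rightarrow> real \<Rightarrow> real" where
  "normal_log_ratio \<mu> t x = ln (std_normal_density x / normal_density \<mu> t x)"

lemma normal_log_ratio_eq:
  assumes "0 < t"
  shows "normal_log_ratio \<mu> t x = ln t + (x - \<mu>)\<^sup>2 / (2 * t\<^sup>2) - x\<^sup>2 / 2"
proof -
  have "std_normal_density x / normal_density \<mu> t x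
      = t * (exp (- x\<^sup>2 / 2) / exp (- (x - \<mu>)\<^sup>2 / (2 * t\<^sup>2)))"
    using assms by (simp add: normal_density_def real_sqrt_mult)
  also have "exp (- x\<^sup>2 / 2) / exp (- (x - \<mu>)\<^sup>2 / (2 * t\<^sup>2)) = exp ((x - \<mu>)\<^sup>2 / (2 * t\<^sup>2) - x\<^sup>2 / 2)"
    by (simp add: exp_diff[symmetric])
  finally have "std_normal_density x / normal_density \<mu> t x = t * exp ((x - \<mu>)\<^sup>2 / (2 * t\<^sup>2) - x\<^sup>2 / 2)" .
  then show ?thesis
    using assms by (simp add: normal_log_ratio_def ln_mult)
qed

lemma borel_measurable_normal_log_ratio [measurable]: "normal_log_ratio \<mu> t \<in> borel_measurable borel"
  unfolding normal_log_ratio_def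
  by (intro borel_measurable_ln borel_measurable_divide borel_measurable_normal_density)

lemma std_normal_density_eq_exp_log_ratio:
  assumes "0 < t"
  shows "std_normal_density x = normal_density \<mu> t x * exp (normal_log_ratio \<mu> t x)"
  using normal_density_pos[OF assms, of \<mu> x] normal_density_pos[of 1 0 x]
  by (simp add: normal_log_ratio_def)

lemma has_bochner_integral_normal_log_ratio:
  assumes "0 < t"
  shows "has_bochner_integral lborel (\<lambda>x. normal_density \<mu> t x * normal_log_ratio \<mu> t x)
           (ln t - (\<mu>\<^sup>2 + t\<^sup>2 - 1) / 2)"
proof -
  have "has_bochner_integral lborel (\<lambda>x. ln t * normal_density \<mu> t x
      + 1 / (2 * t\<^sup>2) * (normal_density \<mu> t x * (x - \<mu>)\<^sup>2) - 1 / 2 * (normal_density \<mu> t x * x\<^sup>2))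
      (ln t * 1 + 1 / (2 * t\<^sup>2) * t\<^sup>2 - 1 / 2 * (\<mu>\<^sup>2 + t\<^sup>2))"
    using assms
    by (intro has_bochner_integral_add has_bochner_integral_diff has_bochner_integral_mult_right
        has_bochner_integral_normal_central_square has_bochner_integral_normal_square
        has_bochner_integral_normal_density)
  then show ?thesis
    by (rule has_bochner_integral_cong[THEN iffD1, rotated 3])
      (use assms in \<open>simp_all add: normal_log_ratio_eq field_simps\<close>)
qed

section \<open>Isotropic Gaussian measures\<close>

lemma has_bochner_integral_prod_density:
  fixes d f :: "'i::finite \<Rightarrow> real \<Rightarrow> real"
  assumes [measurable]: "\<And>k. d k \<in> borel_measurable borel" "\<And>k. f k \<in> borel_measurable borel"
    and "\<And>k x. 0 \<le> d k x"
    and "\<And>k. has_bochner_integral lborel (\<lambda>x. d k x * f k x) (I k)"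
  shows "has_bochner_integral (density (PiM UNIV (\<lambda>_. lborel)) (\<lambda>z. \<Prod>k\<in>UNIV. d k (z k)))
           (\<lambda>z. \<Prod>k\<in>UNIV. f k (z k)) (\<Prod>k\<in>UNIV. I k)"
proof -
  interpret product_sigma_finite "\<lambda>_::'i. lborel :: real measure" by standard
  have "integrable (PiM UNIV (\<lambda>_. lborel)) (\<lambda>z. \<Prod>k\<in>UNIV. d k (z k) * f k (z k))"
    "(\<integral>z. (\<Prod>k\<in>UNIV. d k (z k) * f k (z k)) \<partial>PiM UNIV (\<lambda>_. lborel)) = (\<Prod>k\<in>UNIV. I k)"
    using product_integrable_prod[of UNIV "\<lambda>k x. d k x * f k x"]
      product_integral_prod[of UNIV "\<lambda>k x. d k x * f k x"] assms(4)
    by (auto simp: has_bochner_integral_iff)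
  then show ?thesis
    using assms(3)
    by (simp add: has_bochner_integral_iff integrable_density integral_density prod_nonneg prod.distrib)
qed

definition iso_normal :: "('i::finite \<Rightarrow> real) \<Rightarrow> real \<Rightarrow> ('i \<Rightarrow> real) measure" where
  "iso_normal \<mu> t = density (PiM UNIV (\<lambda>_. lborel)) (\<lambda>z. \<Prod>k\<in>UNIV. normal_density (\<mu> k) t (z k))"

lemma sets_iso_normal [measurable_cong, simp]: "sets (iso_normal \<mu> t) = sets (PiM UNIV (\<lambda>_. lborel))"
  by (simp add: iso_normal_def)

lemma has_bochner_integral_iso_normal_prod:
  assumes "0 < t" and [measurable]: "\<And>k. f k \<in> borel_measurable borel"
    and "\<And>k. k \<in> S \<Longrightarrow> has_bochner_integral lborel (\<lambda>x. normal_density (\<mu> k) t x * f k x) (I k)"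
  shows "has_bochner_integral (iso_normal \<mu> t) (\<lambda>z. \<Prod>k\<in>S. f k (z k)) (\<Prod>k\<in>S. I k)"
proof -
  let ?f = "\<lambda>k x. if k \<in> S then f k x else 1" and ?I = "\<lambda>k. if k \<in> S then I k else 1"
  have "has_bochner_integral lborel (\<lambda>x. normal_density (\<mu> k) t x * ?f k x) (?I k)" for k
    using assms(3)[of k] \<open>0 < t\<close> by (auto simp: has_bochner_integral_iff)
  from has_bochner_integral_prod_density[of _ ?f, OF _ _ _ this]
  show ?thesis
    unfolding iso_normal_def by (simp add: prod.inter_restrict[symmetric])
qed

lemma prob_space_iso_normal:
  assumes "0 < t"
  shows "prob_space (iso_normal \<mu> t)"
proof
  have "has_bochner_integral (iso_normal \<mu> t) (\<lambda>_. 1::real) 1"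
    using has_bochner_integral_iso_normal_prod[OF assms, where f="\<lambda>_. id" and S="{}" and \<mu>=\<mu>] by simp
  then have "(\<integral>\<^sup>+_. ennreal 1 \<partial>iso_normal \<mu> t) = ennreal 1"
    by (subst nn_integral_eq_integral) (auto simp: has_bochner_integral_iff)
  then show "emeasure (iso_normal \<mu> t) (space (iso_normal \<mu> t)) = 1"
    by simp
qed

lemma iso_normal_std_eq_density:
  assumes "0 < t"
  shows "iso_normal (\<lambda>_. 0) 1 = density (iso_normal \<mu> t) (\<lambda>z. exp (\<Sum>k\<in>UNIV. normal_log_ratio (\<mu> k) t (z k)))"
proof -
  have ratio: "ennreal (\<Prod>k\<in>UNIV. std_normal_density (z k))
      = ennreal (\<Prod>k\<in>UNIV. normal_density (\<mu> k) t (z k)) * exp (\<Sum>k\<in>UNIV. normal_log_ratio (\<mu> k) t (z k))" for z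
  proof -
    have "(\<Prod>k\<in>UNIV. std_normal_density (z k))
        = (\<Prod>k\<in>UNIV. normal_density (\<mu> k) t (z k) * exp (normal_log_ratio (\<mu> k) t (z k)))"
      by (intro prod.cong refl std_normal_density_eq_exp_log_ratio[OF assms])
    also have "\<dots> = (\<Prod>k\<in>UNIV. normal_density (\<mu> k) t (z k)) * exp (\<Sum>k\<in>UNIV. normal_log_ratio (\<mu> k) t (z k))"
      by (simp add: exp_sum prod.distrib)
    finally show ?thesis
      by (simp add: ennreal_mult prod_nonneg)
  qed
  have "iso_normal (\<lambda>_. 0) 1 = density (PiM UNIV (\<lambda>_. lborel)) (\<lambda>z.
      ennreal (\<Prod>k\<in>UNIV. normal_density (\<mu> k) t (z k)) * exp (\<Sum>k\<in>UNIV. normal_log_ratio (\<mu> k) t (z k)))"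
    unfolding iso_normal_def by (rule density_cong) (measurable, measurable, simp add: ratio)
  also have "\<dots> = density (iso_normal \<mu> t) (\<lambda>z. exp (\<Sum>k\<in>UNIV. normal_log_ratio (\<mu> k) t (z k)))"
    unfolding iso_normal_def by (rule density_density_eq[symmetric]) measurable
  finally show ?thesis .
qed

(* KL(N(mu, t^2 I) || N(0, I)) *)
definition iso_normal_kl :: "('i::finite \<Rightarrow> real) \<Rightarrow> real \<Rightarrow> real" where
  "iso_normal_kl \<mu> t = (\<Sum>k\<in>UNIV. ((\<mu> k)\<^sup>2 + t\<^sup>2 - 1) / 2 - ln t)"

lemma has_bochner_integral_iso_normal_log_ratio:
  assumes "0 < t"
  shows "has_bochner_integral (iso_normal \<mu> t) (\<lambda>z. \<Sum>k\<in>UNIV. normal_log_ratio (\<mu> k) t (z k))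
           (- iso_normal_kl \<mu> t)"
proof -
  have "has_bochner_integral (iso_normal \<mu> t) (\<lambda>z. \<Prod>k'\<in>{k}. normal_log_ratio (\<mu> k') t (z k'))
      (\<Prod>k'\<in>{k}. ln t - ((\<mu> k')\<^sup>2 + t\<^sup>2 - 1) / 2)" for k
    by (rule has_bochner_integral_iso_normal_prod[OF assms, where f="\<lambda>k. normal_log_ratio (\<mu> k) t"])
      (simp_all add: has_bochner_integral_normal_log_ratio[OF assms])
  then have "has_bochner_integral (iso_normal \<mu> t) (\<lambda>z. \<Sum>k\<in>UNIV. normal_log_ratio (\<mu> k) t (z k))
      (\<Sum>k\<in>UNIV. ln t - ((\<mu> k)\<^sup>2 + t\<^sup>2 - 1) / 2)"
    by (intro has_bochner_integral_sum) simp
  then show ?thesis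
    by (simp add: iso_normal_kl_def sum_negf[symmetric])
qed

lemma exp_integral_le_nn_integral_exp:
  assumes "prob_space Q" and F: "integrable Q F"
  shows "ennreal (exp (\<integral>z. F z \<partial>Q)) \<le> (\<integral>\<^sup>+z. exp (F z) \<partial>Q)"
proof (cases "integrable Q (\<lambda>z. exp (F z))")
  case True
  interpret prob_space Q by fact
  have "exp (expectation F) \<le> expectation (\<lambda>z. exp (F z))"
    by (rule jensens_inequality[where I=UNIV]) (use F True exp_convex in auto)
  then show ?thesis
    using True by (simp add: nn_integral_eq_integral)
next
  case False
  moreover have "(\<lambda>z. exp (F z)) \<in> borel_measurable Q"
    using F by measurable
  ultimately have "(\<integral>\<^sup>+z. exp (F z) \<partial>Q) = \<infinity>"
    by (auto simp: integrable_iff_bounded less_top[symmetric])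
  then show ?thesis by simp
qed

lemma donsker_varadhan_iso_normal:
  assumes "0 < t" and "has_bochner_integral (iso_normal \<mu> t) G a"
  shows "ennreal (exp (a - iso_normal_kl \<mu> t)) \<le> (\<integral>\<^sup>+z. exp (G z) \<partial>iso_normal (\<lambda>_. 0) 1)"
proof -
  define \<rho> where "\<rho> z = (\<Sum>k\<in>UNIV. normal_log_ratio (\<mu> k) t (z k))" for z
  have "(\<integral>\<^sup>+z. exp (G z) \<partial>iso_normal (\<lambda>_. 0) 1) = (\<integral>\<^sup>+z. exp (G z) \<partial>density (iso_normal \<mu> t) (\<lambda>z. exp (\<rho> z)))"
    unfolding \<rho>_def iso_normal_std_eq_density[OF assms(1), where \<mu>=\<mu>] ..
  also have "\<dots> = (\<integral>\<^sup>+z. exp (G z + \<rho> z) \<partial>iso_normal \<mu> t)"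
    using assms(2) unfolding \<rho>_def
    by (subst nn_integral_density; measurable?) (auto simp: exp_add ennreal_mult' mult.commute)
  finally have "(\<integral>\<^sup>+z. exp (G z) \<partial>iso_normal (\<lambda>_. 0) 1) = (\<integral>\<^sup>+z. exp (G z + \<rho> z) \<partial>iso_normal \<mu> t)" .
  moreover have H: "has_bochner_integral (iso_normal \<mu> t) (\<lambda>z. G z + \<rho> z) (a + - iso_normal_kl \<mu> t)"
    unfolding \<rho>_def using assms by (intro has_bochner_integral_add has_bochner_integral_iso_normal_log_ratio)
  moreover have "ennreal (exp (\<integral>z. G z + \<rho> z \<partial>iso_normal \<mu> t)) \<le> (\<integral>\<^sup>+z. exp (G z + \<rho> z) \<partial>iso_normal \<mu> t)"
    by (rule exp_integral_le_nn_integral_exp[OF prob_space_iso_normal[OF assms(1)] integrable.intros[OF H]])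
  ultimately show ?thesis
    by (simp add: has_bochner_integral_integral_eq)
qed

section \<open>Gaussian moments of the bilinear form\<close>

lemma sum_vec_nth_power2: "(\<Sum>i\<in>UNIV. (u $ i)\<^sup>2) = (norm (u :: real^'n))\<^sup>2"
  unfolding power2_norm_eq_inner by (simp add: inner_vec_def power2_eq_square)

(* A point z of R^(m+n) stands for the pair (x, y) = (z o Inl, z o Inr). *)
definition pair_bilinear :: "real^'n^'m \<Rightarrow> ('m + 'n \<Rightarrow> real) \<Rightarrow> real" where
  "pair_bilinear X z = (\<Sum>i\<in>UNIV. \<Sum>j\<in>UNIV. z (Inl i) * X $ i $ j * z (Inr j))"

definition pair_sqnorm :: "('m::finite + 'n::finite \<Rightarrow> real) \<Rightarrow> real" where
  "pair_sqnorm z = (\<Sum>i\<in>UNIV. (z (Inl i))\<^sup>2) * (\<Sum>j\<in>UNIV. (z (Inr j))\<^sup>2)"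

lemma pair_bilinear_eq_inner: "pair_bilinear X z = (\<chi> i. z (Inl i)) \<bullet> (X *v (\<chi> j. z (Inr j)))"
  by (simp add: pair_bilinear_def inner_vec_def matrix_vector_mult_def sum_distrib_left mult.assoc)

lemma pair_sqnorm_eq_norm:
  "pair_sqnorm z = (norm (\<chi> i. z (Inl i) :: real^'m))\<^sup>2 * (norm (\<chi> j. z (Inr j) :: real^'n))\<^sup>2"
  by (simp add: pair_sqnorm_def sum_vec_nth_power2[symmetric])

lemma borel_measurable_pair_bilinear [measurable]:
  "pair_bilinear X \<in> borel_measurable (PiM UNIV (\<lambda>_. lborel))"
  unfolding pair_bilinear_def by measurable

lemma borel_measurable_pair_sqnorm [measurable]:
  "pair_sqnorm \<in> borel_measurable (PiM UNIV (\<lambda>_. lborel))"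
  unfolding pair_sqnorm_def by measurable

lemma has_bochner_integral_iso_normal_pair_bilinear:
  assumes "0 < t"
  shows "has_bochner_integral (iso_normal \<mu> t) (pair_bilinear X) (pair_bilinear X \<mu>)"
proof -
  have "has_bochner_integral (iso_normal \<mu> t) (\<lambda>z. \<Prod>k\<in>{Inl i, Inr j}. z k) (\<Prod>k\<in>{Inl i, Inr j}. \<mu> k)" for i j
    using assms by (intro has_bochner_integral_iso_normal_prod[where f="\<lambda>_ x. x"] normal_moment_nz_1) auto
  then have "has_bochner_integral (iso_normal \<mu> t) (\<lambda>z. \<Sum>i\<in>UNIV. \<Sum>j\<in>UNIV. X $ i $ j * (\<Prod>k\<in>{Inl i, Inr j}. z k))
      (\<Sum>i\<in>UNIV. \<Sum>j\<in>UNIV. X $ i $ j * (\<Prod>k\<in>{Inl i, Inr j}. \<mu> k))"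
    by (intro has_bochner_integral_sum has_bochner_integral_mult_right)
  then show ?thesis
    by (simp add: pair_bilinear_def[abs_def] mult_ac)
qed

lemma has_bochner_integral_iso_normal_pair_sqnorm:
  assumes "0 < t"
  shows "has_bochner_integral (iso_normal \<mu> t) pair_sqnorm
           ((\<Sum>i\<in>UNIV. (\<mu> (Inl i))\<^sup>2 + t\<^sup>2) * (\<Sum>j\<in>UNIV. (\<mu> (Inr j))\<^sup>2 + t\<^sup>2))"
proof -
  have "has_bochner_integral (iso_normal \<mu> t) (\<lambda>z. \<Prod>k\<in>{Inl i, Inr j}. (z k)\<^sup>2) (\<Prod>k\<in>{Inl i, Inr j}. (\<mu> k)\<^sup>2 + t\<^sup>2)" for i j
    using assms by (intro has_bochner_integral_iso_normal_prod[where f="\<lambda>_ x. x\<^sup>2"] has_bochner_integral_normal_square) auto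
  then have "has_bochner_integral (iso_normal \<mu> t) (\<lambda>z. \<Sum>i\<in>UNIV. \<Sum>j\<in>UNIV. \<Prod>k\<in>{Inl i, Inr j}. (z k)\<^sup>2)
      (\<Sum>i\<in>UNIV. \<Sum>j\<in>UNIV. \<Prod>k\<in>{Inl i, Inr j}. (\<mu> k)\<^sup>2 + t\<^sup>2)"
    by (intro has_bochner_integral_sum)
  then show ?thesis
    by (simp add: pair_sqnorm_def[abs_def] sum_product)
qed

section \<open>The tilted mass\<close>

definition tilted_mass :: "real \<Rightarrow> real \<Rightarrow> real^'n^'m \<Rightarrow> ennreal" where
  "tilted_mass l c X = (\<integral>\<^sup>+z. exp (l * pair_bilinear X z - c * pair_sqnorm z) \<partial>iso_normal (\<lambda>_. 0) 1)"

lemma tilted_mass_ge: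
  fixes X :: "real^'n^'m" and u :: "real^'m" and v :: "real^'n"
  assumes "0 < \<epsilon>" "\<epsilon> < 1" and u: "norm u = 1" and v: "norm v = 1"
  defines "m \<equiv> real CARD('m)" and "n \<equiv> real CARD('n)"
  shows "exp (l * (\<epsilon>\<^sup>2 * sqrt (m * n) * (u \<bullet> (X *v v))) - c * (m * n) - (m + n) / 2 * ln (1 / (1 - \<epsilon>\<^sup>2)))
           \<le> tilted_mass l c X"
proof -
  have "\<epsilon>\<^sup>2 < 1"
    using assms by (simp add: power_less_one_iff)
  define t where "t = sqrt (1 - \<epsilon>\<^sup>2)"
  have t: "0 < t" "t\<^sup>2 = 1 - \<epsilon>\<^sup>2"
    using \<open>\<epsilon>\<^sup>2 < 1\<close> by (auto simp: t_def)
  \<comment> \<open>Posterior N(mu, t^2 I); the mean is scaled so that E |x|^2 = m and E |y|^2 = n.\<close>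
  define \<mu> :: "'m + 'n \<Rightarrow> real" where "\<mu> = case_sum (\<lambda>i. \<epsilon> * sqrt m * u $ i) (\<lambda>j. \<epsilon> * sqrt n * v $ j)"
  have \<mu>_Inl: "(\<Sum>i\<in>UNIV. (\<mu> (Inl i))\<^sup>2) = \<epsilon>\<^sup>2 * m"
    using u by (simp add: \<mu>_def power_mult_distrib sum_distrib_left[symmetric] sum_vec_nth_power2 m_def)
  have \<mu>_Inr: "(\<Sum>j\<in>UNIV. (\<mu> (Inr j))\<^sup>2) = \<epsilon>\<^sup>2 * n"
    using v by (simp add: \<mu>_def power_mult_distrib sum_distrib_left[symmetric] sum_vec_nth_power2 n_def)
  have "pair_bilinear X \<mu> = \<epsilon>\<^sup>2 * sqrt (m * n) * (u \<bullet> (X *v v))"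
    by (simp add: pair_bilinear_def \<mu>_def inner_vec_def matrix_vector_mult_def sum_distrib_left
        real_sqrt_mult power2_eq_square mult_ac)
  moreover have "(\<Sum>i\<in>UNIV. (\<mu> (Inl i))\<^sup>2 + t\<^sup>2) * (\<Sum>j\<in>UNIV. (\<mu> (Inr j))\<^sup>2 + t\<^sup>2) = m * n"
    using \<mu>_Inl \<mu>_Inr t(2) by (simp add: sum.distrib m_def n_def algebra_simps flip: distrib_left)
  ultimately have E: "has_bochner_integral (iso_normal \<mu> t) (\<lambda>z. l * pair_bilinear X z - c * pair_sqnorm z)
      (l * (\<epsilon>\<^sup>2 * sqrt (m * n) * (u \<bullet> (X *v v))) - c * (m * n))"
    using has_bochner_integral_iso_normal_pair_bilinear[OF t(1), where X=X and \<mu>=\<mu>]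
      has_bochner_integral_iso_normal_pair_sqnorm[OF t(1), where \<mu>=\<mu>]
    by (intro has_bochner_integral_diff has_bochner_integral_mult_right) simp_all
  have "iso_normal_kl \<mu> t = ((\<Sum>k\<in>UNIV. (\<mu> k)\<^sup>2) + (m + n) * (t\<^sup>2 - 1)) / 2 - (m + n) * ln t"
    by (simp add: iso_normal_kl_def sum_subtractf sum.distrib sum_divide_distrib[symmetric] m_def n_def
        algebra_simps)
  also have "(\<Sum>k\<in>UNIV. (\<mu> k)\<^sup>2) = \<epsilon>\<^sup>2 * (m + n)"
    using \<mu>_Inl \<mu>_Inr by (simp add: sum.Plus[of UNIV UNIV, unfolded UNIV_Plus_UNIV] algebra_simps)
  also have "(\<epsilon>\<^sup>2 * (m + n) + (m + n) * (t\<^sup>2 - 1)) / 2 - (m + n) * ln t = (m + n) * (- ln t)"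
    by (simp add: t(2) algebra_simps)
  also have "- ln t = ln (1 / (1 - \<epsilon>\<^sup>2)) / 2"
    using \<open>\<epsilon>\<^sup>2 < 1\<close> by (simp add: t_def ln_sqrt ln_div)
  finally have kl: "iso_normal_kl \<mu> t = (m + n) / 2 * ln (1 / (1 - \<epsilon>\<^sup>2))"
    by simp
  show ?thesis
    using donsker_varadhan_iso_normal[OF t(1) E] unfolding tilted_mass_def kl .
qed

lemma borel_measurable_vec_nth_nth [measurable]:
  fixes A :: "'a \<Rightarrow> real^'n^'m"
  assumes [measurable]: "A \<in> borel_measurable M"
  shows "(\<lambda>w. A w $ i $ j) \<in> borel_measurable M"
proof -
  have "(\<lambda>X::real^'n^'m. X $ i $ j) \<in> borel_measurable borel"
    by (intro borel_measurable_continuous_onI continuous_intros)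
  then show ?thesis by measurable
qed

lemma borel_measurable_tilted_mass [measurable]:
  fixes A :: "'a \<Rightarrow> real^'n^'m"
  assumes [measurable]: "A \<in> borel_measurable M"
  shows "(\<lambda>w. tilted_mass l c (A w)) \<in> borel_measurable M"
proof -
  interpret P: prob_space "iso_normal (\<lambda>_::'m + 'n. 0) 1"
    by (rule prob_space_iso_normal) simp
  show ?thesis
    unfolding tilted_mass_def
    by (rule P.borel_measurable_nn_integral) (simp add: pair_bilinear_def pair_sqnorm_def)
qed

lemma subgaussian_matrix_nn_integral_exp_le_1:
  fixes A :: "'a \<Rightarrow> real^'n^'m"
  assumes "prob_space M" and sg: "subgaussian_matrix M A \<sigma>"
  shows "(\<integral>\<^sup>+w. exp (l * (u \<bullet> (A w *v v)) - l\<^sup>2 * \<sigma>\<^sup>2 / 2 * ((norm u)\<^sup>2 * (norm v)\<^sup>2)) \<partial>M) \<le> 1"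
proof (cases "u = 0 \<or> v = 0")
  case True
  then show ?thesis
    using prob_space.emeasure_space_1[OF assms(1)] by auto
next
  case False
  define l' where "l' = l * norm u * norm v"
  have unit: "norm (u /\<^sub>R norm u) = 1" "norm (v /\<^sub>R norm v) = 1"
    using False by auto
  have "l * (u \<bullet> (A w *v v)) = l' * ((u /\<^sub>R norm u) \<bullet> (A w *v (v /\<^sub>R norm v)))" for w
    using False by (simp add: l'_def matrix_vector_mult_scaleR field_simps)
  moreover have "l\<^sup>2 * \<sigma>\<^sup>2 / 2 * ((norm u)\<^sup>2 * (norm v)\<^sup>2) = l'\<^sup>2 * \<sigma>\<^sup>2 / 2"
    by (simp add: l'_def power_mult_distrib)
  ultimately have eq: "exp (l * (u \<bullet> (A w *v v)) - l\<^sup>2 * \<sigma>\<^sup>2 / 2 * ((norm u)\<^sup>2 * (norm v)\<^sup>2))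
      = exp (l' * ((u /\<^sub>R norm u) \<bullet> (A w *v (v /\<^sub>R norm v)))) / exp (l'\<^sup>2 * \<sigma>\<^sup>2 / 2)" for w
    by (simp add: exp_diff)
  have "integrable M (\<lambda>w. exp (l' * ((u /\<^sub>R norm u) \<bullet> (A w *v (v /\<^sub>R norm v)))))"
    "(\<integral>w. exp (l' * ((u /\<^sub>R norm u) \<bullet> (A w *v (v /\<^sub>R norm v)))) \<partial>M) \<le> exp (l'\<^sup>2 * \<sigma>\<^sup>2 / 2)"
    using sg unit unfolding subgaussian_matrix_def by blast+
  then show ?thesis
    unfolding eq by (subst nn_integral_eq_integral) (auto simp: divide_le_eq)
qed

lemma nn_integral_tilted_mass_le_1:
  fixes A :: "'a \<Rightarrow> real^'n^'m"
  assumes "prob_space M" and sg: "subgaussian_matrix M A \<sigma>"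
  shows "(\<integral>\<^sup>+w. tilted_mass l (l\<^sup>2 * \<sigma>\<^sup>2 / 2) (A w) \<partial>M) \<le> 1"
proof -
  let ?P = "iso_normal (\<lambda>_::'m + 'n. 0) 1"
  interpret P: prob_space ?P
    by (rule prob_space_iso_normal) simp
  interpret pair_sigma_finite M ?P
    unfolding pair_sigma_finite_def
    using prob_space_imp_sigma_finite[OF assms(1)] P.sigma_finite_measure_axioms by simp
  have [measurable]: "A \<in> borel_measurable M"
    using sg by (simp add: subgaussian_matrix_def)
  have "(\<integral>\<^sup>+w. tilted_mass l (l\<^sup>2 * \<sigma>\<^sup>2 / 2) (A w) \<partial>M)
      = (\<integral>\<^sup>+z. (\<integral>\<^sup>+w. exp (l * pair_bilinear (A w) z - l\<^sup>2 * \<sigma>\<^sup>2 / 2 * pair_sqnorm z) \<partial>M) \<partial>?P)"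
    unfolding tilted_mass_def
    by (rule Fubini'[symmetric]) (simp add: pair_bilinear_def pair_sqnorm_def)
  also have "\<dots> \<le> (\<integral>\<^sup>+z. 1 \<partial>?P)"
    unfolding pair_bilinear_eq_inner pair_sqnorm_eq_norm
    by (intro nn_integral_mono subgaussian_matrix_nn_integral_exp_le_1[OF assms])
  also have "\<dots> = 1"
    by (simp add: P.emeasure_space_1)
  finally show ?thesis .
qed

section \<open>The operator norm bound\<close>

lemma continuous_on_onorm_matrix_vector_mult:
  "continuous_on UNIV (\<lambda>X::real^'n^'m. onorm ((*v) X))"
proof -
  have "linear (\<lambda>X::real^'n^'m. Blinfun ((*v) X))"
    by (rule linearI) (auto intro!: blinfun_eqI simp: plus_blinfun.rep_eq scaleR_blinfun.rep_eq
        bounded_linear_Blinfun_apply[OF matrix_vector_mul_bounded_linear]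
        matrix_vector_mult_add_rdistrib scaleR_matrix_vector_assoc)
  then have "continuous_on UNIV (\<lambda>X::real^'n^'m. norm (Blinfun ((*v) X)))"
    by (intro continuous_on_norm linear_continuous_on) (simp add: linear_conv_bounded_linear)
  then show ?thesis
    by (simp add: norm_blinfun.rep_eq bounded_linear_Blinfun_apply)
qed

lemma borel_measurable_onorm_matrix_vector_mult [measurable]:
  fixes A :: "'a \<Rightarrow> real^'n^'m"
  assumes [measurable]: "A \<in> borel_measurable M"
  shows "(\<lambda>w. onorm ((*v) (A w))) \<in> borel_measurable M"
  using borel_measurable_continuous_onI[OF continuous_on_onorm_matrix_vector_mult] by measurable

lemma norm_le_of_inner_unit_le:
  fixes y :: "'a::real_inner"
  assumes "\<And>u. norm u = 1 \<Longrightarrow> u \<bullet> y \<le> R" and "0 \<le> R"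
  shows "norm y \<le> R"
proof (cases "y = 0")
  case False
  then have "(y /\<^sub>R norm y) \<bullet> y = norm y"
    by (simp add: dot_square_norm power2_eq_square)
  then show ?thesis
    using assms(1)[of "y /\<^sub>R norm y"] False by simp
qed (use assms in simp)

lemma onorm_le_of_bilinear_le:
  fixes X :: "real^'n^'m"
  assumes "\<And>u v. norm u = 1 \<Longrightarrow> norm v = 1 \<Longrightarrow> u \<bullet> (X *v v) \<le> R" and "0 \<le> R"
  shows "onorm ((*v) X) \<le> R"
proof (rule onorm_le)
  fix x :: "real^'n"
  show "norm (X *v x) \<le> R * norm x"
  proof (cases "x = 0")
    case False
    have "norm (X *v (x /\<^sub>R norm x)) \<le> R"
      using False by (intro norm_le_of_inner_unit_le assms) auto
    then show ?thesis
      using False by (simp add: matrix_vector_mult_scaleR field_simps)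
  qed simp
qed

lemma lt_of_optimally_tilted_lt:
  fixes \<sigma> r a k :: real
  assumes "0 < \<sigma>" "0 < r" and k: "k = r / \<sigma>" and tilted: "k * a - k\<^sup>2 * \<sigma>\<^sup>2 / 2 < r\<^sup>2 / 2"
  shows "a < \<sigma> * r"
proof -
  have "0 < k" and "k\<^sup>2 * \<sigma>\<^sup>2 / 2 = r\<^sup>2 / 2"
    using assms by (simp_all add: power_divide)
  then have "a < r\<^sup>2 / k"
    using tilted by (simp add: field_simps)
  then show ?thesis
    using assms by (simp add: power2_eq_square mult.commute)
qed

lemma inner_matrix_lt_of_tilted_mass_lt:
  fixes X :: "real^'n^'m" and u :: "real^'m" and v :: "real^'n"
  assumes "0 < \<sigma>" "0 < \<delta>" "0 < \<epsilon>" "\<epsilon> < 1" "norm u = 1" "norm v = 1"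
  defines "m \<equiv> real CARD('m)" and "n \<equiv> real CARD('n)"
  assumes "0 < r" and r: "r\<^sup>2 = (m + n) * ln (1 / (1 - \<epsilon>\<^sup>2)) + 2 * ln (1 / \<delta>)"
  defines "l \<equiv> r / \<sigma> / sqrt (m * n)"
  assumes small: "ennreal \<delta> * tilted_mass l (l\<^sup>2 * \<sigma>\<^sup>2 / 2) X < 1"
  shows "\<epsilon>\<^sup>2 * (u \<bullet> (X *v v)) < \<sigma> * r"
proof -
  define k where "k = l * sqrt (m * n)"
  have "0 < m" "0 < n"
    by (simp_all add: m_def n_def)
  then have k: "k = r / \<sigma>" "l\<^sup>2 * (m * n) = k\<^sup>2"
    by (simp_all add: k_def power_mult_distrib) (simp add: l_def)
  define E where "E = k * (\<epsilon>\<^sup>2 * (u \<bullet> (X *v v))) - k\<^sup>2 * \<sigma>\<^sup>2 / 2 - (m + n) / 2 * ln (1 / (1 - \<epsilon>\<^sup>2))"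
  have linear_term: "k * (\<epsilon>\<^sup>2 * (u \<bullet> (X *v v))) = l * (\<epsilon>\<^sup>2 * sqrt (m * n) * (u \<bullet> (X *v v)))"
    by (simp add: k_def mult_ac)
  have quadratic_term: "k\<^sup>2 * \<sigma>\<^sup>2 / 2 = l\<^sup>2 * \<sigma>\<^sup>2 / 2 * (m * n)"
    by (simp flip: k(2))
  have bound: "ennreal (exp E) \<le> tilted_mass l (l\<^sup>2 * \<sigma>\<^sup>2 / 2) X"
    unfolding E_def linear_term quadratic_term m_def n_def by (rule tilted_mass_ge[OF assms(3-6)])
  have "ennreal (\<delta> * exp E) = ennreal \<delta> * ennreal (exp E)"
    using \<open>0 < \<delta>\<close> by (simp add: ennreal_mult)
  also have "\<dots> \<le> ennreal \<delta> * tilted_mass l (l\<^sup>2 * \<sigma>\<^sup>2 / 2) X"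
    by (rule mult_left_mono[OF bound]) simp
  also note small
  finally have "exp E < 1 / \<delta>"
    using \<open>0 < \<delta>\<close> by (simp add: field_simps)
  then have "E < ln (1 / \<delta>)"
    using ln_less_cancel_iff[of "exp E" "1 / \<delta>"] \<open>0 < \<delta>\<close> by simp
  then have "k * (\<epsilon>\<^sup>2 * (u \<bullet> (X *v v))) - k\<^sup>2 * \<sigma>\<^sup>2 / 2 < r\<^sup>2 / 2"
    unfolding E_def r by simp
  then show ?thesis
    by (rule lt_of_optimally_tilted_lt[OF \<open>0 < \<sigma>\<close> \<open>0 < r\<close> k(1)])
qed

lemma onorm_le_of_tilted_mass_lt:
  fixes X :: "real^'n^'m"
  assumes "0 < \<sigma>" "0 < \<delta>" "\<delta> < 1" "0 < \<epsilon>" "\<epsilon> < 1"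
  defines "m \<equiv> real CARD('m)" and "n \<equiv> real CARD('n)"
  defines "r \<equiv> sqrt ((m + n) * ln (1 / (1 - \<epsilon>\<^sup>2)) + 2 * ln (1 / \<delta>))"
  defines "l \<equiv> r / \<sigma> / sqrt (m * n)"
  assumes "ennreal \<delta> * tilted_mass l (l\<^sup>2 * \<sigma>\<^sup>2 / 2) X < 1"
  shows "onorm (\<lambda>x. X *v x) \<le> \<sigma> * sqrt (ln (1 / (1 - \<epsilon>\<^sup>2)) / \<epsilon> ^ 4 * real (CARD('m) + CARD('n))
                                   + 2 / \<epsilon> ^ 4 * ln (1 / \<delta>))"
proof -
  have "\<epsilon>\<^sup>2 < 1"
    using assms by (simp add: power_less_one_iff)
  then have "0 \<le> ln (1 / (1 - \<epsilon>\<^sup>2))" and "0 < ln (1 / \<delta>)"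
    using assms by simp_all
  then have "0 < (m + n) * ln (1 / (1 - \<epsilon>\<^sup>2)) + 2 * ln (1 / \<delta>)"
    by (simp add: m_def n_def add_nonneg_pos)
  then have r: "0 < r" "r\<^sup>2 = (m + n) * ln (1 / (1 - \<epsilon>\<^sup>2)) + 2 * ln (1 / \<delta>)"
    by (simp_all add: r_def)
  have "onorm (\<lambda>x. X *v x) \<le> \<sigma> * r / \<epsilon>\<^sup>2"
  proof (rule onorm_le_of_bilinear_le)
    fix u :: "real^'m" and v :: "real^'n"
    assume "norm u = 1" "norm v = 1"
    from inner_matrix_lt_of_tilted_mass_lt[OF assms(1,2,4,5) this r(1)
        r(2)[unfolded m_def n_def] assms(10)[unfolded l_def m_def n_def]]
    show "u \<bullet> (X *v v) \<le> \<sigma> * r / \<epsilon>\<^sup>2"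
      using \<open>0 < \<epsilon>\<close> by (simp add: field_simps)
  qed (use assms r in simp)
  also have "\<sigma> * r / \<epsilon>\<^sup>2 = \<sigma> * sqrt (r\<^sup>2 / \<epsilon> ^ 4)"
    using r(1) real_sqrt_unique[of "\<epsilon>\<^sup>2" "\<epsilon> ^ 4"] by (simp add: real_sqrt_divide)
  also have "r\<^sup>2 / \<epsilon> ^ 4 = ln (1 / (1 - \<epsilon>\<^sup>2)) / \<epsilon> ^ 4 * real (CARD('m) + CARD('n)) + 2 / \<epsilon> ^ 4 * ln (1 / \<delta>)"
  proof -
    have "((m + n) * a + 2 * b) / e = a / e * (m + n) + 2 / e * b" for a b e :: real
      by (simp add: add_divide_distrib ac_simps)
    then show ?thesis
      unfolding r by (simp add: m_def n_def)
  qed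
  finally show ?thesis .
qed

lemma prob_Markov_less_1:
  assumes "prob_space M" and [measurable]: "Z \<in> borel_measurable M"
    and "(\<integral>\<^sup>+w. Z w \<partial>M) \<le> 1" and "0 < \<delta>"
  shows "1 - \<delta> \<le> measure M {w \<in> space M. ennreal \<delta> * Z w < 1}"
proof -
  interpret prob_space M by fact
  have "emeasure M {w \<in> space M. 1 \<le> ennreal \<delta> * Z w}
      \<le> ennreal \<delta> * (\<integral>\<^sup>+w. Z w * indicator (space M) w \<partial>M)"
    by (intro nn_integral_Markov_inequality borel_measurable_times_ennreal borel_measurable_indicator
        assms(2)) simp_all
  also have "(\<integral>\<^sup>+w. Z w * indicator (space M) w \<partial>M) = (\<integral>\<^sup>+w. Z w \<partial>M)"
    by (intro nn_integral_cong) simp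
  also have "ennreal \<delta> * (\<integral>\<^sup>+w. Z w \<partial>M) \<le> ennreal \<delta> * 1"
    by (intro mult_left_mono assms(3)) simp
  finally have "measure M {w \<in> space M. 1 \<le> ennreal \<delta> * Z w} \<le> \<delta>"
    using \<open>0 < \<delta>\<close> by (simp add: emeasure_eq_measure)
  moreover have "{w \<in> space M. ennreal \<delta> * Z w < 1} = space M - {w \<in> space M. 1 \<le> ennreal \<delta> * Z w}"
    by (auto simp: not_le)
  ultimately show ?thesis
    by (simp add: prob_compl)
qed

theorem theorem4:
  fixes M :: "'a measure" and A :: "'a \<Rightarrow> real^'n^'m" and \<sigma> \<delta> \<epsilon> :: real
  assumes "prob_space M"
    and "subgaussian_matrix M A \<sigma>"
    and "\<sigma> > 0"
    and "0 < \<delta>" and "\<delta> < 1"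
    and "0 < \<epsilon>" and "\<epsilon> < 1"
  shows "measure M {w \<in> space M. onorm (\<lambda>x. A w *v x) \<le>
           \<sigma> * sqrt (ln (1 / (1 - \<epsilon>\<^sup>2)) / \<epsilon> ^ 4 * real (CARD('m) + CARD('n))
                    + 2 / \<epsilon> ^ 4 * ln (1 / \<delta>))} \<ge> 1 - \<delta>"
proof -
  interpret prob_space M by fact
  let ?R = "\<sigma> * sqrt (ln (1 / (1 - \<epsilon>\<^sup>2)) / \<epsilon> ^ 4 * real (CARD('m) + CARD('n))
                    + 2 / \<epsilon> ^ 4 * ln (1 / \<delta>))"
  define r where "r = sqrt ((real CARD('m) + real CARD('n)) * ln (1 / (1 - \<epsilon>\<^sup>2)) + 2 * ln (1 / \<delta>))"
  define l where "l = r / \<sigma> / sqrt (real CARD('m) * real CARD('n))"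
  have [measurable]: "A \<in> borel_measurable M"
    using assms(2) by (simp add: subgaussian_matrix_def)
  have bound: "onorm (\<lambda>x. A w *v x) \<le> ?R"
    if "ennreal \<delta> * tilted_mass l (l\<^sup>2 * \<sigma>\<^sup>2 / 2) (A w) < 1" for w
    using onorm_le_of_tilted_mass_lt[OF assms(3-7) that[unfolded l_def r_def]] .
  have "1 - \<delta> \<le> measure M {w \<in> space M. ennreal \<delta> * tilted_mass l (l\<^sup>2 * \<sigma>\<^sup>2 / 2) (A w) < 1}"
    by (rule prob_Markov_less_1[OF assms(1) _ nn_integral_tilted_mass_le_1[OF assms(1,2)] assms(4)]) measurable
  also have "\<dots> \<le> measure M {w \<in> space M. onorm (\<lambda>x. A w *v x) \<le> ?R}"
    using bound by (intro finite_measure_mono) auto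
  finally show ?thesis .
qed

end
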